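(* Let $P$ be a finite graded poset with rank function $\operatorname{rk}$. Then $\mathsf{Z}_{P,\operatorname{rk}}$ is entirely determined by the flag $f$-vector of $P$: if $P'$ is another finite graded poset such that for every finite strictly increasing sequence $a=(a_1<\cdots<a_k)$ of nonnegative integers the number of strict chains $c_1<\cdots<c_k$ in $P$ with $(\operatorname{rk}(c_1),\dots,\operatorname{rk}(c_k))=a$ equals the corresponding number for $P'$, then $\mathsf{Z}_{P,\operatorname{rk}}=\mathsf{Z}_{P',\operatorname{rk}}$.
   Context: $q$ is an indeterminate; $[n]_q=(q^n-1)/(q-1)$. A poset is graded if it has a height function increasing by exactly $1$ along every cover relation; $\operatorname{rk}$ is such a function with minimum value $0$ on each connected component. For a finite poset $P$ with height function $h$ ($h(x)<h(y)$ when $y$ covers $x$), the $q$-Zeta polynomial $\mathsf{Z}_{P,h}\in\mathbb{Q}(q)[x]$ is the unique polynomial with $\mathsf{Z}_{P,h}([n]_q)=\sum_{e_1\le\cdots\le e_{n-1}\text{ in }P}q^{h(e_1)+\cdots+h(e_{n-1})}$ for all $n\ge2$ (it exists). *)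

theory Defs
  imports "HOL-Computational_Algebra.Polynomial" "HOL-Computational_Algebra.Fraction_Field"
begin

definition is_poset :: "'a set \<Rightarrow> ('a \<Rightarrow> 'a \<Rightarrow> bool) \<Rightarrow> bool" where
  "is_poset P le \<longleftrightarrow>
     (\<forall>x\<in>P. le x x) \<and>
     (\<forall>x\<in>P. \<forall>y\<in>P. le x y \<and> le y x \<longrightarrow> x = y) \<and>
     (\<forall>x\<in>P. \<forall>y\<in>P. \<forall>z\<in>P. le x y \<and> le y z \<longrightarrow> le x z)"

definition lt_on :: "('a \<Rightarrow> 'a \<Rightarrow> bool) \<Rightarrow> 'a \<Rightarrow> 'a \<Rightarrow> bool" where
  "lt_on le x y \<longleftrightarrow> le x y \<and> x \<noteq> y"

definition covers :: "'a set \<Rightarrow> ('a \<Rightarrow> 'a \<Rightarrow> bool) \<Rightarrow> 'a \<Rightarrow> 'a \<Rightarrow> bool" where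
  "covers P le x y \<longleftrightarrow> x \<in> P \<and> y \<in> P \<and> lt_on le x y \<and>
     \<not> (\<exists>z\<in>P. lt_on le x z \<and> lt_on le z y)"

definition is_height :: "'a set \<Rightarrow> ('a \<Rightarrow> 'a \<Rightarrow> bool) \<Rightarrow> ('a \<Rightarrow> nat) \<Rightarrow> bool" where
  "is_height P le h \<longleftrightarrow> (\<forall>x y. covers P le x y \<longrightarrow> h x < h y)"

definition graded :: "'a set \<Rightarrow> ('a \<Rightarrow> 'a \<Rightarrow> bool) \<Rightarrow> bool" where
  "graded P le \<longleftrightarrow> (\<exists>h :: 'a \<Rightarrow> int. \<forall>x y. covers P le x y \<longrightarrow> h y = h x + 1)"

definition connected_in :: "'a set \<Rightarrow> ('a \<Rightarrow> 'a \<Rightarrow> bool) \<Rightarrow> 'a \<Rightarrow> 'a \<Rightarrow> bool" where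
  "connected_in P le = (\<lambda>x y. x \<in> P \<and> y \<in> P \<and> (le x y \<or> le y x))\<^sup>*\<^sup>*"

text \<open>rk: increases by exactly 1 along covers, and has minimum value 0 on every
  connected component (values are natural numbers, so the minimum is 0 iff some
  element of the component has rank 0).\<close>
definition is_rank_fun :: "'a set \<Rightarrow> ('a \<Rightarrow> 'a \<Rightarrow> bool) \<Rightarrow> ('a \<Rightarrow> nat) \<Rightarrow> bool" where
  "is_rank_fun P le rk \<longleftrightarrow>
     (\<forall>x y. covers P le x y \<longrightarrow> rk y = rk x + 1) \<and>
     (\<forall>x\<in>P. \<exists>y\<in>P. connected_in P le x y \<and> rk y = 0)"

type_synonym qfield = "rat poly fract"

definition qvar :: qfield where "qvar = Fract [:0, 1:] 1"

definition qint :: "nat \<Rightarrow> qfield" where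
  "qint n = (qvar ^ n - 1) / (qvar - 1)"

definition multichains :: "'a set \<Rightarrow> ('a \<Rightarrow> 'a \<Rightarrow> bool) \<Rightarrow> nat \<Rightarrow> 'a list set" where
  "multichains P le m = {es. length es = m \<and> set es \<subseteq> P \<and>
       (\<forall>i. Suc i < m \<longrightarrow> le (es ! i) (es ! Suc i))}"

definition is_qZeta :: "'a set \<Rightarrow> ('a \<Rightarrow> 'a \<Rightarrow> bool) \<Rightarrow> ('a \<Rightarrow> nat) \<Rightarrow> qfield poly \<Rightarrow> bool" where
  "is_qZeta P le h Z \<longleftrightarrow>
     (\<forall>n\<ge>2. poly Z (qint n) = (\<Sum>es\<in>multichains P le (n - 1). qvar ^ sum_list (map h es)))"

definition qZeta :: "'a set \<Rightarrow> ('a \<Rightarrow> 'a \<Rightarrow> bool) \<Rightarrow> ('a \<Rightarrow> nat) \<Rightarrow> qfield poly" where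
  "qZeta P le h = (THE Z. is_qZeta P le h Z)"

definition flag_f :: "'a set \<Rightarrow> ('a \<Rightarrow> 'a \<Rightarrow> bool) \<Rightarrow> ('a \<Rightarrow> nat) \<Rightarrow> nat list \<Rightarrow> nat" where
  "flag_f P le rk a = card {cs. length cs = length a \<and> set cs \<subseteq> P \<and>
       sorted_wrt (lt_on le) cs \<and> map rk cs = a}"

end

theory Submission
  imports Defs
begin

(* Group the multichains e_1 <= ... <= e_m by their rank sequence r, a weakly increasing
   list. Since the rank strictly increases along the strict order, consecutive entries of a
   multichain with equal rank are equal, and deleting adjacent repetitions is a bijection from
   the multichains with rank sequence r onto the strict chains with rank sequence
   remdups_adj r. So the multichain sums defining the q-Zeta polynomial are linear
   combinations of flag f-numbers, and P and P' are assigned the same polynomial. *)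

lemma successively_remdups_adj_neq:
  "successively R xs \<Longrightarrow> successively (\<lambda>x y. R x y \<and> x \<noteq> y) (remdups_adj xs)"
  by (induction xs rule: remdups_adj.induct) (auto simp: successively_Cons)

lemma sorted_wrt_less_remdups_adj:
  "sorted (xs :: 'a::linorder list) \<Longrightarrow> sorted_wrt (<) (remdups_adj xs)"
proof -
  assume "sorted xs"
  then have "successively (\<lambda>x y. x \<le> y \<and> x \<noteq> y) (remdups_adj xs)"
    by (intro successively_remdups_adj_neq) (simp add: successively_if_sorted_wrt)
  then have "successively (<) (remdups_adj xs)"
    by (simp add: order.strict_iff_order)
  then show ?thesis
    by (simp add: successively_conv_sorted_wrt)
qed

lemma remdups_adj_map_inj_on:
  "inj_on f (set xs) \<Longrightarrow> remdups_adj (map f xs) = map f (remdups_adj xs)"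
  by (induction xs rule: remdups_adj.induct) (auto simp: inj_on_def)

lemma sorted_wrt_comparable:
  "sorted_wrt R xs \<Longrightarrow> x \<in> set xs \<Longrightarrow> y \<in> set xs \<Longrightarrow> x \<noteq> y \<Longrightarrow> R x y \<or> R y x"
  by (induction xs) auto

lemma
  assumes "is_poset P le"
  shows is_poset_refl: "x \<in> P \<Longrightarrow> le x x"
    and is_poset_antisym: "x \<in> P \<Longrightarrow> y \<in> P \<Longrightarrow> le x y \<Longrightarrow> le y x \<Longrightarrow> x = y"
    and is_poset_trans: "x \<in> P \<Longrightarrow> y \<in> P \<Longrightarrow> z \<in> P \<Longrightarrow> le x y \<Longrightarrow> le y z \<Longrightarrow> le x z"
  using assms unfolding is_poset_def by blast+

lemma lt_on_trans:
  assumes "is_poset P le" "x \<in> P" "y \<in> P" "z \<in> P" "lt_on le x y" "lt_on le y z"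
  shows "lt_on le x z"
  using assms is_poset_antisym[OF assms(1)] is_poset_trans[OF assms(1)]
  unfolding lt_on_def by metis

lemma multichains_iff:
  "es \<in> multichains P le m \<longleftrightarrow> length es = m \<and> set es \<subseteq> P \<and> successively le es"
  by (auto simp: multichains_def successively_conv_nth)

lemma finite_multichains: "finite P \<Longrightarrow> finite (multichains P le m)"
  by (rule finite_subset[OF _ finite_lists_length_eq[of P m]]) (auto simp: multichains_def)

lemma multichain_sorted_wrt:
  assumes "is_poset P le" "es \<in> multichains P le m"
  shows "sorted_wrt le es"
proof -
  have "successively le es" "set es \<subseteq> P"
    using assms(2) by (simp_all add: multichains_iff)
  then show ?thesis
    using successively_iff_sorted_wrt_strong[of es le] is_poset_trans[OF assms(1)] by blast
qed

lemma sorted_wrt_lt_on_remdups_adj: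
  assumes "is_poset P le" "es \<in> multichains P le m"
  shows "sorted_wrt (lt_on le) (remdups_adj es)"
proof -
  have "successively (lt_on le) (remdups_adj es)"
    using successively_remdups_adj_neq[of le es] assms(2)
    by (simp add: multichains_iff lt_on_def[abs_def])
  moreover have "set (remdups_adj es) \<subseteq> P"
    using assms(2) by (simp add: multichains_iff)
  ultimately show ?thesis
    using lt_on_trans[OF assms(1)] successively_iff_sorted_wrt_strong by (metis subsetD)
qed

lemma strict_chain_in_multichains:
  assumes "set cs \<subseteq> P" "sorted_wrt (lt_on le) cs"
  shows "cs \<in> multichains P le (length cs)"
proof -
  have "successively (lt_on le) cs"
    using assms(2) by (rule successively_if_sorted_wrt)
  then have "successively le cs"
    by (rule successively_mono) (simp add: lt_on_def)
  then show ?thesis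
    using assms(1) by (simp add: multichains_iff)
qed

lemma rank_fun_is_height: "is_rank_fun P le rk \<Longrightarrow> is_height P le rk"
  by (simp add: is_rank_fun_def is_height_def)

definition multichains_with_ranks ::
    "'a set \<Rightarrow> ('a \<Rightarrow> 'a \<Rightarrow> bool) \<Rightarrow> ('a \<Rightarrow> nat) \<Rightarrow> nat list \<Rightarrow> 'a list set" where
  "multichains_with_ranks P le h r = {es \<in> multichains P le (length r). map h es = r}"

definition strict_chains_with_ranks ::
    "'a set \<Rightarrow> ('a \<Rightarrow> 'a \<Rightarrow> bool) \<Rightarrow> ('a \<Rightarrow> nat) \<Rightarrow> nat list \<Rightarrow> 'a list set" where
  "strict_chains_with_ranks P le h a =
     {cs. length cs = length a \<and> set cs \<subseteq> P \<and> sorted_wrt (lt_on le) cs \<and> map h cs = a}"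

lemma flag_f_eq_card: "flag_f P le h a = card (strict_chains_with_ranks P le h a)"
  by (simp add: flag_f_def strict_chains_with_ranks_def)

lemma sum_multichains_group_by_ranks:
  fixes f :: "nat list \<Rightarrow> 'c::comm_semiring_1"
  assumes "finite P" "\<forall>x\<in>P. h x \<le> N"
  shows "(\<Sum>es\<in>multichains P le m. f (map h es)) =
    (\<Sum>r\<in>{r. length r = m \<and> set r \<subseteq> {..N}}.
       of_nat (card (multichains_with_ranks P le h r)) * f r)"
proof -
  let ?R = "{r. length r = m \<and> set r \<subseteq> {..N}}"
  have "finite ?R"
    using finite_lists_length_eq[of "{..N}" m] by (simp add: conj_commute)
  moreover have "map h ` multichains P le m \<subseteq> ?R"
    using assms(2) by (fastforce simp: multichains_iff)
  ultimately have "(\<Sum>es\<in>multichains P le m. f (map h es)) =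
      (\<Sum>r\<in>?R. \<Sum>es\<in>{es \<in> multichains P le m. map h es = r}. f (map h es))"
    by (rule sum.group[OF finite_multichains[OF assms(1)], symmetric])
  also have "\<dots> = (\<Sum>r\<in>?R. of_nat (card (multichains_with_ranks P le h r)) * f r)"
    by (intro sum.cong refl) (simp add: multichains_with_ranks_def multichains_iff)
  finally show ?thesis .
qed

locale finite_poset_height =
  fixes P :: "'a set" and le :: "'a \<Rightarrow> 'a \<Rightarrow> bool" and h :: "'a \<Rightarrow> nat"
  assumes finite: "finite P" and poset: "is_poset P le" and height: "is_height P le h"
begin

(* Induction on the size of the interval (x, y]: if y does not cover x, any z strictly
   between them splits it into the two smaller intervals (x, z] and (z, y]. *)
lemma height_strict_mono: "x \<in> P \<Longrightarrow> y \<in> P \<Longrightarrow> lt_on le x y \<Longrightarrow> h x < h y"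
proof (induction "card {z\<in>P. lt_on le x z \<and> le z y}" arbitrary: x y rule: less_induct)
  case less
  show ?case
  proof (cases "covers P le x y")
    case True
    then show ?thesis using height by (simp add: is_height_def)
  next
    case False
    then obtain z where z: "z \<in> P" "lt_on le x z" "lt_on le z y"
      using less.prems by (auto simp: covers_def)
    let ?I = "\<lambda>a b. {w\<in>P. lt_on le a w \<and> le w b}"
    have "?I x z \<subseteq> ?I x y" "y \<in> ?I x y - ?I x z"
      using poset z less.prems unfolding is_poset_def lt_on_def by blast+
    then have "card (?I x z) < card (?I x y)"
      using finite by (intro psubset_card_mono) auto
    then have "h x < h z"
      using less.hyps less.prems(1) z(1,2) by blast
    have "?I z y \<subseteq> ?I x y" "z \<in> ?I x y - ?I z y"
      using poset z less.prems unfolding is_poset_def lt_on_def by blast+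
    then have "card (?I z y) < card (?I x y)"
      using finite by (intro psubset_card_mono) auto
    then have "h z < h y"
      using less.hyps less.prems(2) z(1,3) by blast
    with \<open>h x < h z\<close> show ?thesis by simp
  qed
qed

lemma height_mono: "x \<in> P \<Longrightarrow> y \<in> P \<Longrightarrow> le x y \<Longrightarrow> h x \<le> h y"
  using height_strict_mono[of x y] by (cases "x = y") (auto simp: lt_on_def)

lemma multichain_le_if_height_le:
  assumes es: "es \<in> multichains P le m" and xy: "x \<in> set es" "y \<in> set es" "h x \<le> h y"
  shows "le x y"
proof -
  have "x \<in> P" "y \<in> P"
    using es xy by (auto simp: multichains_iff)
  moreover have "x = y \<or> le x y \<or> le y x"
    using sorted_wrt_comparable[OF multichain_sorted_wrt[OF poset es] xy(1,2)] by blast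
  ultimately show ?thesis
    using height_strict_mono[of y x] xy(3) is_poset_refl[OF poset] by (auto simp: lt_on_def)
qed

lemma inj_on_height_multichain:
  assumes "es \<in> multichains P le m"
  shows "inj_on h (set es)"
proof (rule inj_onI)
  fix x y assume xy: "x \<in> set es" "y \<in> set es" "h x = h y"
  then have "le x y" "le y x"
    using multichain_le_if_height_le[OF assms] by simp_all
  moreover have "x \<in> P" "y \<in> P"
    using assms xy by (auto simp: multichains_iff)
  ultimately show "x = y"
    using is_poset_antisym[OF poset] by blast
qed

lemma sorted_heights_multichain:
  assumes "es \<in> multichains P le m"
  shows "sorted (map h es)"
proof -
  have "sorted_wrt (\<lambda>x y. h x \<le> h y) es"
    using multichain_sorted_wrt[OF poset assms]
  proof (rule sorted_wrt_mono_rel[rotated])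
    show "le x y \<Longrightarrow> h x \<le> h y" if "x \<in> set es" "y \<in> set es" for x y
      using height_mono that assms by (auto simp: multichains_iff)
  qed
  then show ?thesis by (simp add: sorted_wrt_map)
qed

lemma multichains_with_ranks_unsorted:
  "\<not> sorted r \<Longrightarrow> multichains_with_ranks P le h r = {}"
  using sorted_heights_multichain by (auto simp: multichains_with_ranks_def)

lemma remdups_adj_in_strict_chains_with_ranks:
  assumes "es \<in> multichains_with_ranks P le h r"
  shows "remdups_adj es \<in> strict_chains_with_ranks P le h (remdups_adj r)"
proof -
  have es: "es \<in> multichains P le (length r)" "map h es = r"
    using assms by (simp_all add: multichains_with_ranks_def)
  have "map h (remdups_adj es) = remdups_adj r"
    using remdups_adj_map_inj_on[OF inj_on_height_multichain[OF es(1)]] es(2) by simp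
  moreover have "set (remdups_adj es) \<subseteq> P"
    using es(1) by (simp add: multichains_iff)
  ultimately show ?thesis
    using sorted_wrt_lt_on_remdups_adj[OF poset es(1)]
    by (auto simp: strict_chains_with_ranks_def dest: arg_cong[of _ _ length])
qed

lemma multichain_from_remdups_adj:
  assumes "es \<in> multichains_with_ranks P le h r"
  shows "map (the_inv_into (set (remdups_adj es)) h) r = es"
proof -
  have "inj_on h (set es)" "map h es = r"
    using assms inj_on_height_multichain by (auto simp: multichains_with_ranks_def)
  then show ?thesis by (auto simp: the_inv_into_f_f intro!: map_idI)
qed

lemma multichain_from_strict_chain:
  assumes r: "sorted r" and cs: "cs \<in> strict_chains_with_ranks P le h (remdups_adj r)"
  defines "es \<equiv> map (the_inv_into (set cs) h) r"
  shows "es \<in> multichains_with_ranks P le h r" and "remdups_adj es = cs"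
proof -
  let ?g = "the_inv_into (set cs) h"
  have cs_P: "set cs \<subseteq> P" and cs_chain: "sorted_wrt (lt_on le) cs"
    and cs_h: "map h cs = remdups_adj r"
    using cs by (simp_all add: strict_chains_with_ranks_def)
  have inj: "inj_on h (set cs)"
    using sorted_wrt_less_remdups_adj[OF r] cs_h by (metis distinct_map strict_sorted_iff)
  have set_r: "set r = h ` set cs"
    using cs_h by (metis remdups_adj_set set_map)
  have g_in: "?g v \<in> set cs" and h_g: "h (?g v) = v" if "v \<in> set r" for v
    using that inj set_r by (auto simp: the_inv_into_into f_the_inv_into_f)
  have "successively le es"
  proof -
    have "successively (\<le>) r"
      using r by (simp add: successively_if_sorted_wrt)
    then show ?thesis
      unfolding es_def successively_map
    proof (rule successively_mono)
      fix v w assume "v \<in> set r" "w \<in> set r" "v \<le> w"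
      then show "le (?g v) (?g w)"
        using g_in h_g
        by (intro multichain_le_if_height_le[OF strict_chain_in_multichains[OF cs_P cs_chain]])
           simp_all
    qed
  qed
  moreover have "map h es = r"
    unfolding es_def by (simp add: map_idI h_g)
  moreover have "set es \<subseteq> P"
    using g_in cs_P unfolding es_def by auto
  ultimately show "es \<in> multichains_with_ranks P le h r"
    by (simp add: multichains_with_ranks_def multichains_iff es_def)
  have "remdups_adj es = map ?g (remdups_adj r)"
    unfolding es_def using inj_on_the_inv_into[OF inj] set_r by (simp add: remdups_adj_map_inj_on)
  also have "\<dots> = cs"
    using inj by (simp flip: cs_h add: map_idI the_inv_into_f_f)
  finally show "remdups_adj es = cs" .
qed

lemma bij_betw_remdups_adj_multichains_with_ranks:
  assumes "sorted r"
  shows "bij_betw remdups_adj (multichains_with_ranks P le h r)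
           (strict_chains_with_ranks P le h (remdups_adj r))"
  by (rule bij_betw_byWitness[where f' = "\<lambda>cs. map (the_inv_into (set cs) h) r"])
     (use multichain_from_remdups_adj remdups_adj_in_strict_chains_with_ranks
          multichain_from_strict_chain[OF assms] in auto)

lemma card_multichains_with_ranks:
  "card (multichains_with_ranks P le h r) =
     (if sorted r then flag_f P le h (remdups_adj r) else 0)"
  using bij_betw_same_card[OF bij_betw_remdups_adj_multichains_with_ranks]
  by (simp add: multichains_with_ranks_unsorted flag_f_eq_card)

end

(* qZeta is a definite description, so equal defining properties suffice. *)
lemma qZeta_cong:
  assumes "\<And>m. (\<Sum>es\<in>multichains P le m. qvar ^ sum_list (map h es)) =
                (\<Sum>es\<in>multichains P' le' m. qvar ^ sum_list (map h' es))"
  shows "qZeta P le h = qZeta P' le' h'"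
  unfolding qZeta_def is_qZeta_def assms ..

theorem mainTheorem20:
  fixes P :: "'a set" and le :: "'a \<Rightarrow> 'a \<Rightarrow> bool" and rk :: "'a \<Rightarrow> nat"
    and P' :: "'b set" and le' :: "'b \<Rightarrow> 'b \<Rightarrow> bool" and rk' :: "'b \<Rightarrow> nat"
  assumes "finite P" and "is_poset P le" and "graded P le" and "is_rank_fun P le rk"
    and "finite P'" and "is_poset P' le'" and "graded P' le'" and "is_rank_fun P' le' rk'"
    and "\<forall>a :: nat list. sorted_wrt (<) a \<longrightarrow> flag_f P le rk a = flag_f P' le' rk' a"
  shows "qZeta P le rk = qZeta P' le' rk'"
proof (rule qZeta_cong)
  interpret P: finite_poset_height P le rk
    using assms(1,2,4) by (simp add: finite_poset_height_def rank_fun_is_height)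
  interpret P': finite_poset_height P' le' rk'
    using assms(5,6,8) by (simp add: finite_poset_height_def rank_fun_is_height)
  have fibres:
    "card (multichains_with_ranks P le rk r) = card (multichains_with_ranks P' le' rk' r)" for r
    using assms(9) sorted_wrt_less_remdups_adj
    by (auto simp: P.card_multichains_with_ranks P'.card_multichains_with_ranks)
  define N where "N = Max (rk ` P) + Max (rk' ` P')"
  have "\<forall>x\<in>P. rk x \<le> N" "\<forall>x\<in>P'. rk' x \<le> N"
    using assms(1,5) by (auto simp: N_def trans_le_add1 trans_le_add2)
  then show "(\<Sum>es\<in>multichains P le m. qvar ^ sum_list (map rk es)) =
             (\<Sum>es\<in>multichains P' le' m. qvar ^ sum_list (map rk' es))" for m
    using assms(1,5)
    by (simp add: sum_multichains_group_by_ranks[where f = "\<lambda>r. qvar ^ sum_list r"] fibres)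
qed

end
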